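(* Let $R_0$ be a commutative Noetherian ring in which $2$ is a unit. Let $R_0[\mathbb Q]=R_0[a_{ij},\ell_{ij}\ (1\le i\le 2,1\le j\le 3),\psi_{12},\psi_{13},\psi_{23},z_1,z_2]$ be a polynomial ring in these $17$ indeterminates and let $\mathbb Q$ be the complex over $R_0[\mathbb Q]$ described below. Let $R_0[\mathbb M]=R_0[x_{ij},y_{ij}\ (1\le i<j\le 4),\ z_{ijk}\ (1\le i<j<k\le 4),\ t]$ be a polynomial ring in these $17$ indeterminates and let $\mathbb M$ be the complex over $R_0[\mathbb M]$ described below. Then there is a surjective $R_0$-algebra homomorphism $\mu:R_0[\mathbb Q]\to R_0[\mathbb M]$ such that the complexes $\mathbb Q\otimes_{R_0[\mathbb Q]}R_0[\mathbb M]$ and $\mathbb M$ are isomorphic.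
   Context: The complex $\mathbb Q$: $0\to R^2\xrightarrow{q_3}R^6\xrightarrow{q_2}R^5\xrightarrow{q_1}R$ (with $R=R_0[\mathbb Q]$). Write $A=(a_{ij})$, $L=(\ell_{ij})$ ($2\times 3$), $P=(\psi_{23},-\psi_{13},\psi_{12})^{\rm T}$, $N=\sum_{i=1}^3(a_{1i}\ell_{2i}-a_{2i}\ell_{1i})$. $q_1=[g_1\ g_2\ g_3\ g_4\ g_5]$ with $g_1=-\det\begin{bmatrix}\psi_{23}&-\psi_{13}&\psi_{12}\\ \ell_{11}&\ell_{12}&\ell_{13}\\ \ell_{21}&\ell_{22}&\ell_{23}\end{bmatrix}-z_2N-z_2z_1$, $g_2=P^{\rm T}A^{\rm T}\begin{bmatrix}\ell_{21}\\-\ell_{11}\end{bmatrix}-z_2(a_{12}a_{23}-a_{13}a_{22})+z_1\psi_{23}$, $g_3=P^{\rm T}A^{\rm T}\begin{bmatrix}\ell_{22}\\-\ell_{12}\end{bmatrix}+z_2(a_{11}a_{23}-a_{13}a_{21})-z_1\psi_{13}$, $g_4=P^{\rm T}A^{\rm T}\begin{bmatrix}\ell_{23}\\-\ell_{13}\end{bmatrix}-z_2(a_{11}a_{22}-a_{12}a_{21})+z_1\psi_{12}$, $g_5=-\det(AL^{\rm T})-z_1N-z_1^2$. $q_2$ ($5\times6$) has columns (rows 1 to 5): $C_1=(\psi_{12}a_{23}-\psi_{13}a_{22}+\psi_{23}a_{21},\ -\ell_{22}\psi_{12}-\ell_{23}\psi_{13}+z_2a_{21},\ \ell_{21}\psi_{12}-\ell_{23}\psi_{23}+z_2a_{22},\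 \ell_{21}\psi_{13}+\ell_{22}\psi_{23}+z_2a_{23},\ 0)$; $C_2=(-\psi_{12}a_{13}+\psi_{13}a_{12}-\psi_{23}a_{11},\ \psi_{12}\ell_{12}+\psi_{13}\ell_{13}-z_2a_{11},\ -\psi_{12}\ell_{11}+\psi_{23}\ell_{13}-z_2a_{12},\ -\psi_{13}\ell_{11}-\psi_{23}\ell_{12}-z_2a_{13},\ 0)$; $C_3=(z_1,\ \ell_{12}\ell_{23}-\ell_{13}\ell_{22},\ -(\ell_{11}\ell_{23}-\ell_{13}\ell_{21}),\ \ell_{11}\ell_{22}-\ell_{12}\ell_{21},\ -z_2)$; $C_4=(a_{12}a_{23}-a_{13}a_{22},\ -(a_{12}\ell_{22}-a_{22}\ell_{12})-(a_{13}\ell_{23}-a_{23}\ell_{13})-z_1,\ a_{12}\ell_{21}-a_{22}\ell_{11},\ a_{13}\ell_{21}-a_{23}\ell_{11},\ -\psi_{23})$; $C_5=(-(a_{11}a_{23}-a_{13}a_{21}),\ a_{11}\ell_{22}-a_{21}\ell_{12},\ -(a_{11}\ell_{21}-a_{21}\ell_{11})-(a_{13}\ell_{23}-a_{23}\ell_{13})-z_1,\ a_{13}\ell_{22}-a_{23}\ell_{12},\ \psi_{13})$; $C_6=(a_{11}a_{22}-a_{12}a_{21},\ a_{11}\ell_{23}-a_{21}\ell_{13},\ a_{12}\ell_{23}-a_{22}\ell_{13},\ -(a_{11}\ell_{21}-a_{21}\ell_{11})-(a_{12}\ell_{22}-a_{22}\ell_{12})-z_1,\ -\psi_{12})$. $q_3$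 ($6\times2$), rows (column 1; column 2): $(a_{11}\ell_{11}+a_{12}\ell_{12}+a_{13}\ell_{13};\ a_{11}\ell_{21}+a_{12}\ell_{22}+a_{13}\ell_{23}+z_1)$, $(a_{21}\ell_{11}+a_{22}\ell_{12}+a_{23}\ell_{13}-z_1;\ a_{21}\ell_{21}+a_{22}\ell_{22}+a_{23}\ell_{23})$, $(-a_{11}\psi_{23}+a_{12}\psi_{13}-a_{13}\psi_{12};\ -a_{21}\psi_{23}+a_{22}\psi_{13}-a_{23}\psi_{12})$, $(-\ell_{12}\psi_{12}-\ell_{13}\psi_{13}+z_2a_{11};\ -\ell_{22}\psi_{12}-\ell_{23}\psi_{13}+z_2a_{21})$, $(\ell_{11}\psi_{12}-\ell_{13}\psi_{23}+z_2a_{12};\ \ell_{21}\psi_{12}-\ell_{23}\psi_{23}+z_2a_{22})$, $(\ell_{11}\psi_{13}+\ell_{12}\psi_{23}+z_2a_{13};\ \ell_{21}\psi_{13}+\ell_{22}\psi_{23}+z_2a_{23})$. The complex $\mathbb M$: $0\to R^2\xrightarrow{m_3}R^6\xrightarrow{m_2}R^5\xrightarrow{m_1}R$ (with $R=R_0[\mathbb M]$). Put $D(ij,kl)=x_{ij}y_{kl}-x_{kl}y_{ij}$, $a=x_{12}x_{34}-x_{13}x_{24}+x_{14}x_{23}$, $b=x_{12}y_{34}-x_{13}y_{24}+x_{14}y_{23}+y_{12}x_{34}-y_{13}x_{24}+y_{14}x_{23}$, $c=y_{12}y_{34}-y_{13}y_{24}+y_{14}y_{23}$, $u=b^2-4ac$,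 $u_{123}=-2z_{234}D(12,13)+2z_{134}D(12,23)-2z_{124}D(13,23)+z_{123}(D(13,24)-D(12,34)+D(14,23))$, $u_{124}=2z_{234}D(12,14)-2z_{134}D(12,24)+z_{124}(D(12,34)+D(13,24)+D(14,23))-2z_{123}D(14,24)$, $u_{134}=2z_{234}D(13,14)+z_{134}(-D(12,34)-D(13,24)+D(14,23))+2z_{124}D(13,34)-2z_{123}D(14,34)$, $u_{234}=z_{234}(-D(12,34)+D(13,24)-D(14,23))-2z_{134}D(23,24)+2z_{124}D(23,34)-2z_{123}D(24,34)$. $m_1=[-u_{234}+tz_{234},\ -u_{134}+tz_{134},\ -u_{124}+tz_{124},\ -u_{123}-tz_{123},\ -u+t^2]$. $m_2$ ($5\times 6$) has columns (rows 1 to 5): $(-y_{12}z_{134}+y_{13}z_{124}-y_{14}z_{123},\ y_{12}z_{234}-y_{23}z_{124}+y_{24}z_{123},\ -y_{13}z_{234}+y_{23}z_{134}-y_{34}z_{123},\ -y_{14}z_{234}+y_{24}z_{134}-y_{34}z_{124},\ 0)$; $(-x_{12}z_{134}+x_{13}z_{124}-x_{14}z_{123},\ x_{12}z_{234}-x_{23}z_{124}+x_{24}z_{123},\ -x_{13}z_{234}+x_{23}z_{134}-x_{34}z_{123},\ -x_{14}z_{234}+x_{24}z_{134}-x_{34}z_{124},\ 0)$; $(-x_{12}y_{34}+x_{34}y_{12}+x_{13}y_{24}-x_{24}y_{13}-x_{14}y_{23}+x_{23}y_{14}+t,\ -2(x_{23}y_{24}-x_{24}y_{23}),\ 2(x_{23}y_{34}-x_{34}y_{23}),\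 2(x_{24}y_{34}-x_{34}y_{24}),\ -z_{234})$; $(2(x_{13}y_{14}-x_{14}y_{13}),\ -x_{12}y_{34}+x_{34}y_{12}-x_{13}y_{24}+x_{24}y_{13}+x_{14}y_{23}-x_{23}y_{14}+t,\ 2(x_{13}y_{34}-x_{34}y_{13}),\ 2(x_{14}y_{34}-x_{34}y_{14}),\ -z_{134})$; $(-2(x_{12}y_{14}-x_{14}y_{12}),\ 2(x_{12}y_{24}-x_{24}y_{12}),\ -x_{12}y_{34}+x_{34}y_{12}-x_{13}y_{24}+x_{24}y_{13}-x_{14}y_{23}+x_{23}y_{14}-t,\ -2(x_{14}y_{24}-x_{24}y_{14}),\ z_{124})$; $(-2(x_{12}y_{13}-x_{13}y_{12}),\ 2(x_{12}y_{23}-x_{23}y_{12}),\ -2(x_{13}y_{23}-x_{23}y_{13}),\ x_{12}y_{34}-x_{34}y_{12}-x_{13}y_{24}+x_{24}y_{13}-x_{14}y_{23}+x_{23}y_{14}+t,\ z_{123})$. $m_3$ ($6\times2$), rows (column 1; column 2): $(x_{12}y_{34}-x_{13}y_{24}+x_{14}y_{23}+x_{34}y_{12}-x_{24}y_{13}+x_{23}y_{14}+t;\ 2(x_{12}x_{34}-x_{13}x_{24}+x_{14}x_{23}))$, $(-2(y_{12}y_{34}-y_{13}y_{24}+y_{14}y_{23});\ -x_{12}y_{34}+x_{13}y_{24}-x_{14}y_{23}-x_{34}y_{12}+x_{24}y_{13}-x_{23}y_{14}+t)$, $(-(-y_{12}z_{134}+y_{13}z_{124}-y_{14}z_{123});\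 -(-x_{12}z_{134}+x_{13}z_{124}-x_{14}z_{123}))$, $(-y_{12}z_{234}+y_{23}z_{124}-y_{24}z_{123};\ -x_{12}z_{234}+x_{23}z_{124}-x_{24}z_{123})$, $(-y_{13}z_{234}+y_{23}z_{134}-y_{34}z_{123};\ -x_{13}z_{234}+x_{23}z_{134}-x_{34}z_{123})$, $(-(-y_{14}z_{234}+y_{24}z_{134}-y_{34}z_{124});\ -(-x_{14}z_{234}+x_{24}z_{134}-x_{34}z_{124}))$. An isomorphism of complexes means a family of isomorphisms of the modules in each degree commuting with the differentials. *)

theory Defs
  imports "HOL-Library.Poly_Mapping" "Jordan_Normal_Form.Matrix"
begin

definition ring_ideal :: "'a::comm_ring_1 set \<Rightarrow> bool" where
  "ring_ideal I \<longleftrightarrow> 0 \<in> I \<and> (\<forall>x\<in>I. \<forall>y\<in>I. x + y \<in> I) \<and> (\<forall>r. \<forall>x\<in>I. r * x \<in> I)"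

definition noetherian_ring :: "'a::comm_ring_1 itself \<Rightarrow> bool" where
  "noetherian_ring _ \<longleftrightarrow>
     (\<forall>I :: nat \<Rightarrow> 'a set. (\<forall>n. ring_ideal (I n)) \<and> (\<forall>n. I n \<subseteq> I (Suc n))
        \<longrightarrow> (\<exists>N. \<forall>n\<ge>N. I n = I N))"

datatype qvar = A11 | A12 | A13 | A21 | A22 | A23
  | L11 | L12 | L13 | L21 | L22 | L23 | Psi12 | Psi13 | Psi23 | Z1 | Z2

datatype mvar = X12 | X13 | X14 | X23 | X24 | X34
  | Y12 | Y13 | Y14 | Y23 | Y24 | Y34 | Z123 | Z124 | Z134 | Z234 | T

type_synonym ('v, 'a) mpoly = "('v \<Rightarrow>\<^sub>0 nat) \<Rightarrow>\<^sub>0 'a"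

definition PVar :: "'v \<Rightarrow> ('v, 'a::comm_ring_1) mpoly" where
  "PVar v = Poly_Mapping.single (Poly_Mapping.single v 1) 1"

definition PConst :: "'a::comm_ring_1 \<Rightarrow> ('v, 'a) mpoly" where
  "PConst c = Poly_Mapping.single 0 c"

definition R0_alg_hom :: "(('v, 'a::comm_ring_1) mpoly \<Rightarrow> ('w, 'a) mpoly) \<Rightarrow> bool" where
  "R0_alg_hom f \<longleftrightarrow> f 1 = 1 \<and> (\<forall>x y. f (x + y) = f x + f y) \<and> (\<forall>x y. f (x * y) = f x * f y)
     \<and> (\<forall>c. f (PConst c) = PConst c)"

text \<open>Index maps (only used at the valid indices).\<close>
definition qa :: "nat \<Rightarrow> nat \<Rightarrow> qvar" where
  "qa i j = (if i = 1 then (if j = 1 then A11 else if j = 2 then A12 else A13)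
             else (if j = 1 then A21 else if j = 2 then A22 else A23))"
definition ql :: "nat \<Rightarrow> nat \<Rightarrow> qvar" where
  "ql i j = (if i = 1 then (if j = 1 then L11 else if j = 2 then L12 else L13)
             else (if j = 1 then L21 else if j = 2 then L22 else L23))"
definition qpsi :: "nat \<Rightarrow> nat \<Rightarrow> qvar" where
  "qpsi i j = (if (i,j) = (1,2) then Psi12 else if (i,j) = (1,3) then Psi13 else Psi23)"
definition mx :: "nat \<Rightarrow> nat \<Rightarrow> mvar" where
  "mx i j = (if (i,j) = (1,2) then X12 else if (i,j) = (1,3) then X13 else if (i,j) = (1,4) then X14
             else if (i,j) = (2,3) then X23 else if (i,j) = (2,4) then X24 else X34)"
definition my :: "nat \<Rightarrow> nat \<Rightarrow> mvar" where
  "my i j = (if (i,j) = (1,2) then Y12 else if (i,j) = (1,3) then Y13 else if (i,j) = (1,4) then Y14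
             else if (i,j) = (2,3) then Y23 else if (i,j) = (2,4) then Y24 else Y34)"
definition mz :: "nat \<Rightarrow> nat \<Rightarrow> nat \<Rightarrow> mvar" where
  "mz i j k = (if (i,j,k) = (1,2,3) then Z123 else if (i,j,k) = (1,2,4) then Z124
               else if (i,j,k) = (1,3,4) then Z134 else Z234)"

section \<open>The complex Q (generic in the entries)\<close>

definition det3 :: "'r::comm_ring_1 \<Rightarrow> 'r \<Rightarrow> 'r \<Rightarrow> 'r \<Rightarrow> 'r \<Rightarrow> 'r \<Rightarrow> 'r \<Rightarrow> 'r \<Rightarrow> 'r \<Rightarrow> 'r" where
  "det3 a b c d e f g h i = a*(e*i - f*h) - b*(d*i - f*g) + c*(d*h - e*g)"

context
  fixes a l p :: "nat \<Rightarrow> nat \<Rightarrow> 'r::comm_ring_1" and z1 z2 :: 'r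
begin

definition NQ :: 'r where
  "NQ = (\<Sum>i\<in>{1..3}. a 1 i * l 2 i - a 2 i * l 1 i)"

text \<open>P^T A^T [v1; v2] with P = (psi23, -psi13, psi12)^T.\<close>
definition PAv :: "'r \<Rightarrow> 'r \<Rightarrow> 'r" where
  "PAv v1 v2 = p 2 3 * (a 1 1 * v1 + a 2 1 * v2) - p 1 3 * (a 1 2 * v1 + a 2 2 * v2)
               + p 1 2 * (a 1 3 * v1 + a 2 3 * v2)"

definition ALt :: "nat \<Rightarrow> nat \<Rightarrow> 'r" where
  "ALt i k = (\<Sum>j\<in>{1..3}. a i j * l k j)"

definition Qd1 :: "'r mat" where
  "Qd1 = mat_of_rows_list 5 [[
     - det3 (p 2 3) (- p 1 3) (p 1 2) (l 1 1) (l 1 2) (l 1 3) (l 2 1) (l 2 2) (l 2 3) - z2 * NQ - z2 * z1,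
     PAv (l 2 1) (- l 1 1) - z2 * (a 1 2 * a 2 3 - a 1 3 * a 2 2) + z1 * p 2 3,
     PAv (l 2 2) (- l 1 2) + z2 * (a 1 1 * a 2 3 - a 1 3 * a 2 1) - z1 * p 1 3,
     PAv (l 2 3) (- l 1 3) - z2 * (a 1 1 * a 2 2 - a 1 2 * a 2 1) + z1 * p 1 2,
     - (ALt 1 1 * ALt 2 2 - ALt 1 2 * ALt 2 1) - z1 * NQ - z1 ^ 2]]"

definition Qd2 :: "'r mat" where
  "Qd2 = mat_of_cols_list 5 [
     [p 1 2 * a 2 3 - p 1 3 * a 2 2 + p 2 3 * a 2 1,
      - l 2 2 * p 1 2 - l 2 3 * p 1 3 + z2 * a 2 1,
      l 2 1 * p 1 2 - l 2 3 * p 2 3 + z2 * a 2 2,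
      l 2 1 * p 1 3 + l 2 2 * p 2 3 + z2 * a 2 3,
      0],
     [- p 1 2 * a 1 3 + p 1 3 * a 1 2 - p 2 3 * a 1 1,
      p 1 2 * l 1 2 + p 1 3 * l 1 3 - z2 * a 1 1,
      - p 1 2 * l 1 1 + p 2 3 * l 1 3 - z2 * a 1 2,
      - p 1 3 * l 1 1 - p 2 3 * l 1 2 - z2 * a 1 3,
      0],
     [z1,
      l 1 2 * l 2 3 - l 1 3 * l 2 2,
      - (l 1 1 * l 2 3 - l 1 3 * l 2 1),
      l 1 1 * l 2 2 - l 1 2 * l 2 1,
      - z2],
     [a 1 2 * a 2 3 - a 1 3 * a 2 2,
      - (a 1 2 * l 2 2 - a 2 2 * l 1 2) - (a 1 3 * l 2 3 - a 2 3 * l 1 3) - z1,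
      a 1 2 * l 2 1 - a 2 2 * l 1 1,
      a 1 3 * l 2 1 - a 2 3 * l 1 1,
      - p 2 3],
     [- (a 1 1 * a 2 3 - a 1 3 * a 2 1),
      a 1 1 * l 2 2 - a 2 1 * l 1 2,
      - (a 1 1 * l 2 1 - a 2 1 * l 1 1) - (a 1 3 * l 2 3 - a 2 3 * l 1 3) - z1,
      a 1 3 * l 2 2 - a 2 3 * l 1 2,
      p 1 3],
     [a 1 1 * a 2 2 - a 1 2 * a 2 1,
      a 1 1 * l 2 3 - a 2 1 * l 1 3,
      a 1 2 * l 2 3 - a 2 2 * l 1 3,
      - (a 1 1 * l 2 1 - a 2 1 * l 1 1) - (a 1 2 * l 2 2 - a 2 2 * l 1 2) - z1,
      - p 1 2]]"

definition Qd3 :: "'r mat" where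
  "Qd3 = mat_of_rows_list 2 [
     [a 1 1 * l 1 1 + a 1 2 * l 1 2 + a 1 3 * l 1 3,
      a 1 1 * l 2 1 + a 1 2 * l 2 2 + a 1 3 * l 2 3 + z1],
     [a 2 1 * l 1 1 + a 2 2 * l 1 2 + a 2 3 * l 1 3 - z1,
      a 2 1 * l 2 1 + a 2 2 * l 2 2 + a 2 3 * l 2 3],
     [- a 1 1 * p 2 3 + a 1 2 * p 1 3 - a 1 3 * p 1 2,
      - a 2 1 * p 2 3 + a 2 2 * p 1 3 - a 2 3 * p 1 2],
     [- l 1 2 * p 1 2 - l 1 3 * p 1 3 + z2 * a 1 1,
      - l 2 2 * p 1 2 - l 2 3 * p 1 3 + z2 * a 2 1],
     [l 1 1 * p 1 2 - l 1 3 * p 2 3 + z2 * a 1 2,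
      l 2 1 * p 1 2 - l 2 3 * p 2 3 + z2 * a 2 2],
     [l 1 1 * p 1 3 + l 1 2 * p 2 3 + z2 * a 1 3,
      l 2 1 * p 1 3 + l 2 2 * p 2 3 + z2 * a 2 3]]"

end

section \<open>The complex M (generic in the entries)\<close>

context
  fixes x y :: "nat \<Rightarrow> nat \<Rightarrow> 'r::comm_ring_1" and z :: "nat \<Rightarrow> nat \<Rightarrow> nat \<Rightarrow> 'r" and t :: 'r
begin

definition DM :: "nat \<Rightarrow> nat \<Rightarrow> nat \<Rightarrow> nat \<Rightarrow> 'r" where
  "DM i j k m = x i j * y k m - x k m * y i j"

definition Ma :: 'r where "Ma = x 1 2 * x 3 4 - x 1 3 * x 2 4 + x 1 4 * x 2 3"
definition Mb :: 'r where
  "Mb = x 1 2 * y 3 4 - x 1 3 * y 2 4 + x 1 4 * y 2 3 + y 1 2 * x 3 4 - y 1 3 * x 2 4 + y 1 4 * x 2 3"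
definition Mc :: 'r where "Mc = y 1 2 * y 3 4 - y 1 3 * y 2 4 + y 1 4 * y 2 3"
definition Mu :: 'r where "Mu = Mb ^ 2 - 4 * Ma * Mc"

definition u123 :: 'r where
  "u123 = - 2 * z 2 3 4 * DM 1 2 1 3 + 2 * z 1 3 4 * DM 1 2 2 3 - 2 * z 1 2 4 * DM 1 3 2 3
          + z 1 2 3 * (DM 1 3 2 4 - DM 1 2 3 4 + DM 1 4 2 3)"
definition u124 :: 'r where
  "u124 = 2 * z 2 3 4 * DM 1 2 1 4 - 2 * z 1 3 4 * DM 1 2 2 4
          + z 1 2 4 * (DM 1 2 3 4 + DM 1 3 2 4 + DM 1 4 2 3) - 2 * z 1 2 3 * DM 1 4 2 4"
definition u134 :: 'r where
  "u134 = 2 * z 2 3 4 * DM 1 3 1 4 + z 1 3 4 * (- DM 1 2 3 4 - DM 1 3 2 4 + DM 1 4 2 3)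
          + 2 * z 1 2 4 * DM 1 3 3 4 - 2 * z 1 2 3 * DM 1 4 3 4"
definition u234 :: 'r where
  "u234 = z 2 3 4 * (- DM 1 2 3 4 + DM 1 3 2 4 - DM 1 4 2 3) - 2 * z 1 3 4 * DM 2 3 2 4
          + 2 * z 1 2 4 * DM 2 3 3 4 - 2 * z 1 2 3 * DM 2 4 3 4"

definition Md1 :: "'r mat" where
  "Md1 = mat_of_rows_list 5 [[- u234 + t * z 2 3 4, - u134 + t * z 1 3 4, - u124 + t * z 1 2 4,
                             - u123 - t * z 1 2 3, - Mu + t ^ 2]]"

definition Md2 :: "'r mat" where
  "Md2 = mat_of_cols_list 5 [
     [- y 1 2 * z 1 3 4 + y 1 3 * z 1 2 4 - y 1 4 * z 1 2 3,
      y 1 2 * z 2 3 4 - y 2 3 * z 1 2 4 + y 2 4 * z 1 2 3,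
      - y 1 3 * z 2 3 4 + y 2 3 * z 1 3 4 - y 3 4 * z 1 2 3,
      - y 1 4 * z 2 3 4 + y 2 4 * z 1 3 4 - y 3 4 * z 1 2 4,
      0],
     [- x 1 2 * z 1 3 4 + x 1 3 * z 1 2 4 - x 1 4 * z 1 2 3,
      x 1 2 * z 2 3 4 - x 2 3 * z 1 2 4 + x 2 4 * z 1 2 3,
      - x 1 3 * z 2 3 4 + x 2 3 * z 1 3 4 - x 3 4 * z 1 2 3,
      - x 1 4 * z 2 3 4 + x 2 4 * z 1 3 4 - x 3 4 * z 1 2 4,
      0],
     [- x 1 2 * y 3 4 + x 3 4 * y 1 2 + x 1 3 * y 2 4 - x 2 4 * y 1 3 - x 1 4 * y 2 3 + x 2 3 * y 1 4 + t,
      - 2 * (x 2 3 * y 2 4 - x 2 4 * y 2 3),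
      2 * (x 2 3 * y 3 4 - x 3 4 * y 2 3),
      2 * (x 2 4 * y 3 4 - x 3 4 * y 2 4),
      - z 2 3 4],
     [2 * (x 1 3 * y 1 4 - x 1 4 * y 1 3),
      - x 1 2 * y 3 4 + x 3 4 * y 1 2 - x 1 3 * y 2 4 + x 2 4 * y 1 3 + x 1 4 * y 2 3 - x 2 3 * y 1 4 + t,
      2 * (x 1 3 * y 3 4 - x 3 4 * y 1 3),
      2 * (x 1 4 * y 3 4 - x 3 4 * y 1 4),
      - z 1 3 4],
     [- 2 * (x 1 2 * y 1 4 - x 1 4 * y 1 2),
      2 * (x 1 2 * y 2 4 - x 2 4 * y 1 2),
      - x 1 2 * y 3 4 + x 3 4 * y 1 2 - x 1 3 * y 2 4 + x 2 4 * y 1 3 - x 1 4 * y 2 3 + x 2 3 * y 1 4 - t,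
      - 2 * (x 1 4 * y 2 4 - x 2 4 * y 1 4),
      z 1 2 4],
     [- 2 * (x 1 2 * y 1 3 - x 1 3 * y 1 2),
      2 * (x 1 2 * y 2 3 - x 2 3 * y 1 2),
      - 2 * (x 1 3 * y 2 3 - x 2 3 * y 1 3),
      x 1 2 * y 3 4 - x 3 4 * y 1 2 - x 1 3 * y 2 4 + x 2 4 * y 1 3 - x 1 4 * y 2 3 + x 2 3 * y 1 4 + t,
      z 1 2 3]]"

definition Md3 :: "'r mat" where
  "Md3 = mat_of_rows_list 2 [
     [x 1 2 * y 3 4 - x 1 3 * y 2 4 + x 1 4 * y 2 3 + x 3 4 * y 1 2 - x 2 4 * y 1 3 + x 2 3 * y 1 4 + t,
      2 * (x 1 2 * x 3 4 - x 1 3 * x 2 4 + x 1 4 * x 2 3)],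
     [- 2 * (y 1 2 * y 3 4 - y 1 3 * y 2 4 + y 1 4 * y 2 3),
      - x 1 2 * y 3 4 + x 1 3 * y 2 4 - x 1 4 * y 2 3 - x 3 4 * y 1 2 + x 2 4 * y 1 3 - x 2 3 * y 1 4 + t],
     [- (- y 1 2 * z 1 3 4 + y 1 3 * z 1 2 4 - y 1 4 * z 1 2 3),
      - (- x 1 2 * z 1 3 4 + x 1 3 * z 1 2 4 - x 1 4 * z 1 2 3)],
     [- y 1 2 * z 2 3 4 + y 2 3 * z 1 2 4 - y 2 4 * z 1 2 3,
      - x 1 2 * z 2 3 4 + x 2 3 * z 1 2 4 - x 2 4 * z 1 2 3],
     [- y 1 3 * z 2 3 4 + y 2 3 * z 1 3 4 - y 3 4 * z 1 2 3,
      - x 1 3 * z 2 3 4 + x 2 3 * z 1 3 4 - x 3 4 * z 1 2 3],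
     [- (- y 1 4 * z 2 3 4 + y 2 4 * z 1 3 4 - y 3 4 * z 1 2 4),
      - (- x 1 4 * z 2 3 4 + x 2 4 * z 1 3 4 - x 3 4 * z 1 2 4)]]"

end

definition QQ1 :: "(qvar, 'a::comm_ring_1) mpoly mat" where
  "QQ1 = Qd1 (\<lambda>i j. PVar (qa i j)) (\<lambda>i j. PVar (ql i j)) (\<lambda>i j. PVar (qpsi i j)) (PVar Z1) (PVar Z2)"
definition QQ2 :: "(qvar, 'a::comm_ring_1) mpoly mat" where
  "QQ2 = Qd2 (\<lambda>i j. PVar (qa i j)) (\<lambda>i j. PVar (ql i j)) (\<lambda>i j. PVar (qpsi i j)) (PVar Z1) (PVar Z2)"
definition QQ3 :: "(qvar, 'a::comm_ring_1) mpoly mat" where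
  "QQ3 = Qd3 (\<lambda>i j. PVar (qa i j)) (\<lambda>i j. PVar (ql i j)) (\<lambda>i j. PVar (qpsi i j)) (PVar Z1) (PVar Z2)"

definition MM1 :: "(mvar, 'a::comm_ring_1) mpoly mat" where
  "MM1 = Md1 (\<lambda>i j. PVar (mx i j)) (\<lambda>i j. PVar (my i j)) (\<lambda>i j k. PVar (mz i j k)) (PVar T)"
definition MM2 :: "(mvar, 'a::comm_ring_1) mpoly mat" where
  "MM2 = Md2 (\<lambda>i j. PVar (mx i j)) (\<lambda>i j. PVar (my i j)) (\<lambda>i j k. PVar (mz i j k)) (PVar T)"
definition MM3 :: "(mvar, 'a::comm_ring_1) mpoly mat" where
  "MM3 = Md3 (\<lambda>i j. PVar (mx i j)) (\<lambda>i j. PVar (my i j)) (\<lambda>i j k. PVar (mz i j k)) (PVar T)"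

text \<open>Complex 0 -> R^n3 --d3--> R^n2 --d2--> R^n1 --d1--> R^n0 (maps as matrices acting on
  column vectors).\<close>
definition complex3_iso :: "'r::comm_ring_1 mat \<Rightarrow> 'r mat \<Rightarrow> 'r mat \<Rightarrow> 'r mat \<Rightarrow> 'r mat \<Rightarrow> 'r mat \<Rightarrow> bool" where
  "complex3_iso d1 d2 d3 e1 e2 e3 \<longleftrightarrow>
     (\<exists>U0 U1 U2 U3.
        U0 \<in> carrier_mat (dim_row e1) (dim_row d1) \<and> U1 \<in> carrier_mat (dim_col e1) (dim_col d1) \<and>
        U2 \<in> carrier_mat (dim_col e2) (dim_col d2) \<and> U3 \<in> carrier_mat (dim_col e3) (dim_col d3) \<and>
        invertible_mat U0 \<and> invertible_mat U1 \<and> invertible_mat U2 \<and> invertible_mat U3 \<and>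
        U0 * d1 = e1 * U1 \<and> U1 * d2 = e2 * U2 \<and> U2 * d3 = e3 * U3)"

end

theory Submission
  imports Defs
begin

(* The homomorphism mu substitutes a_1j, a_2j by the Pluecker coordinates x_1(j+1), y_1(j+1),
   l_1j, l_2j by twice the coordinates of x, y complementary to {1, j+1} (signed by the
   complementary permutation), psi_12, psi_13, psi_23 by z_123, z_124, z_134, z_2 by 2 z_234 and
   z_1 by t + <y,x> - <x,y>, where <x,y> = x_12 y_34 - x_13 y_24 + x_14 y_23.
   After this substitution each differential of Q agrees with the corresponding differential of
   M up to rescaling basis vectors by +-1 or +-2 and, in degree 3, swapping the two basis
   vectors; for the last entry of the first differential this is the identity
   4 <x,y> <y,x> + (<y,x> - <x,y>)^2 = (<x,y> + <y,x>)^2. Since 2 is a unit these base changes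
   are invertible, and mu is onto because every variable of R0[M] is the image of an explicit
   polynomial involving 1/2. *)

section \<open>Substitution in polynomials\<close>

definition eval_monom :: "('v \<Rightarrow> 'b::comm_monoid_mult) \<Rightarrow> ('v \<Rightarrow>\<^sub>0 nat) \<Rightarrow> 'b" where
  "eval_monom \<sigma> m = (\<Prod>v\<in>Poly_Mapping.keys m. \<sigma> v ^ Poly_Mapping.lookup m v)"

definition subst_mpoly :: "('v \<Rightarrow> ('w, 'a::comm_ring_1) mpoly) \<Rightarrow> ('v, 'a) mpoly \<Rightarrow> ('w, 'a) mpoly"
  where "subst_mpoly \<sigma> p =
    (\<Sum>m\<in>Poly_Mapping.keys p. PConst (Poly_Mapping.lookup p m) * eval_monom \<sigma> m)"

lemma eval_monom_superset:
  assumes "finite S" "Poly_Mapping.keys m \<subseteq> S"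
  shows "eval_monom \<sigma> m = (\<Prod>v\<in>S. \<sigma> v ^ Poly_Mapping.lookup m v)"
  unfolding eval_monom_def
  by (rule prod.mono_neutral_left) (use assms in \<open>auto simp: in_keys_iff\<close>)

lemma eval_monom_0 [simp]: "eval_monom \<sigma> 0 = 1"
  by (simp add: eval_monom_def)

lemma eval_monom_single: "eval_monom \<sigma> (Poly_Mapping.single v 1) = \<sigma> v"
  unfolding eval_monom_def by simp

lemma eval_monom_add: "eval_monom \<sigma> (m + n) = eval_monom \<sigma> m * eval_monom \<sigma> n"
proof -
  let ?S = "Poly_Mapping.keys m \<union> Poly_Mapping.keys n"
  have "Poly_Mapping.keys (m + n) \<subseteq> ?S" by (rule keys_add)
  then show ?thesis
    by (simp add: eval_monom_superset[of ?S] lookup_add power_add prod.distrib)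
qed

lemma PConst_0 [simp]: "PConst 0 = 0"
  by (simp add: PConst_def)

lemma PConst_1 [simp]: "PConst 1 = 1"
  by (simp add: PConst_def)

lemma PConst_add: "PConst (a + b) = PConst a + PConst b"
  by (simp add: PConst_def single_add)

lemma PConst_mult: "PConst (a * b) = PConst a * PConst b"
  by (simp add: PConst_def mult_single)

lemma poly_mapping_sum_single:
  "(p :: 'k \<Rightarrow>\<^sub>0 'b::comm_monoid_add) =
     (\<Sum>m\<in>Poly_Mapping.keys p. Poly_Mapping.single m (Poly_Mapping.lookup p m))"
proof (rule poly_mapping_eqI)
  fix k
  have "(\<Sum>m\<in>Poly_Mapping.keys p. Poly_Mapping.lookup (Poly_Mapping.single m (Poly_Mapping.lookup p m)) k)
      = Poly_Mapping.lookup p k"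
    by (simp add: lookup_single when_def sum.delta' in_keys_iff)
  then show "Poly_Mapping.lookup p k = Poly_Mapping.lookup
      (\<Sum>m\<in>Poly_Mapping.keys p. Poly_Mapping.single m (Poly_Mapping.lookup p m)) k"
    by (simp add: lookup_sum)
qed

lemma subst_mpoly_superset:
  assumes "finite S" "Poly_Mapping.keys p \<subseteq> S"
  shows "subst_mpoly \<sigma> p = (\<Sum>m\<in>S. PConst (Poly_Mapping.lookup p m) * eval_monom \<sigma> m)"
  unfolding subst_mpoly_def
  by (rule sum.mono_neutral_left) (use assms in \<open>auto simp: in_keys_iff\<close>)

lemma subst_mpoly_0 [simp]: "subst_mpoly \<sigma> 0 = 0"
  by (simp add: subst_mpoly_def)

lemma subst_mpoly_add: "subst_mpoly \<sigma> (p + q) = subst_mpoly \<sigma> p + subst_mpoly \<sigma> q"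
proof -
  let ?S = "Poly_Mapping.keys p \<union> Poly_Mapping.keys q"
  have "Poly_Mapping.keys (p + q) \<subseteq> ?S" by (rule keys_add)
  then show ?thesis
    by (simp add: subst_mpoly_superset[of ?S] lookup_add PConst_add distrib_right sum.distrib)
qed

lemma subst_mpoly_sum: "subst_mpoly \<sigma> (sum f S) = (\<Sum>x\<in>S. subst_mpoly \<sigma> (f x))"
  by (induction S rule: infinite_finite_induct) (auto simp: subst_mpoly_add)

lemma subst_mpoly_single:
  "subst_mpoly \<sigma> (Poly_Mapping.single m c) = PConst c * eval_monom \<sigma> m"
  by (simp add: subst_mpoly_superset[of "{m}"])

lemma subst_mpoly_mult: "subst_mpoly \<sigma> (p * q) = subst_mpoly \<sigma> p * subst_mpoly \<sigma> q"
proof -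
  have "p * q = (\<Sum>m\<in>Poly_Mapping.keys p. \<Sum>n\<in>Poly_Mapping.keys q.
      Poly_Mapping.single (m + n) (Poly_Mapping.lookup p m * Poly_Mapping.lookup q n))"
    by (subst poly_mapping_sum_single[of p], subst poly_mapping_sum_single[of q])
      (simp add: sum_product mult_single)
  then have "subst_mpoly \<sigma> (p * q) = (\<Sum>m\<in>Poly_Mapping.keys p. \<Sum>n\<in>Poly_Mapping.keys q.
      PConst (Poly_Mapping.lookup p m) * eval_monom \<sigma> m *
      (PConst (Poly_Mapping.lookup q n) * eval_monom \<sigma> n))"
    by (simp add: subst_mpoly_sum subst_mpoly_single eval_monom_add PConst_mult ac_simps)
  also have "\<dots> = subst_mpoly \<sigma> p * subst_mpoly \<sigma> q"
    by (simp add: subst_mpoly_def sum_product)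
  finally show ?thesis .
qed

lemma subst_mpoly_1: "subst_mpoly \<sigma> 1 = 1"
  using subst_mpoly_single[of \<sigma> 0 1] by simp

lemma subst_mpoly_PConst [simp]: "subst_mpoly \<sigma> (PConst c) = PConst c"
  by (simp add: PConst_def subst_mpoly_single)

lemma subst_mpoly_PVar [simp]: "subst_mpoly \<sigma> (PVar v) = \<sigma> v"
  unfolding PVar_def subst_mpoly_single eval_monom_single by simp

lemma comm_ring_hom_subst_mpoly: "comm_ring_hom (subst_mpoly \<sigma>)"
  by unfold_locales (simp_all add: subst_mpoly_add subst_mpoly_mult subst_mpoly_1)

lemma R0_alg_hom_subst_mpoly: "R0_alg_hom (subst_mpoly \<sigma>)"
  by (simp add: R0_alg_hom_def subst_mpoly_add subst_mpoly_mult subst_mpoly_1)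

lemma comm_ring_hom_subst_mpoly_commute:
  assumes "comm_ring_hom f" "\<And>c. f (PConst c) = PConst c"
  shows "f (subst_mpoly \<tau> q) = subst_mpoly (f \<circ> \<tau>) q"
proof -
  interpret comm_ring_hom f by fact
  show ?thesis
    by (simp add: subst_mpoly_def eval_monom_def hom_distribs assms(2))
qed

lemma PVar_power: "PVar v ^ k = Poly_Mapping.single (Poly_Mapping.single v k) 1"
  by (induction k) (simp_all add: PVar_def mult_single single_add[symmetric])

lemma prod_single_1:
  "(\<Prod>v\<in>S. Poly_Mapping.single (g v) (1::'b::comm_semiring_1)) = Poly_Mapping.single (\<Sum>v\<in>S. g v) 1"
  by (induction S rule: infinite_finite_induct) (auto simp: mult_single)

lemma subst_mpoly_PVar_id: "subst_mpoly PVar q = q"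
proof -
  have monom: "eval_monom PVar m = Poly_Mapping.single m 1" for m :: "'v \<Rightarrow>\<^sub>0 nat"
    unfolding eval_monom_def PVar_power prod_single_1
    using poly_mapping_sum_single[of m] by simp
  have "subst_mpoly PVar q =
      (\<Sum>m\<in>Poly_Mapping.keys q. Poly_Mapping.single m (Poly_Mapping.lookup q m))"
    unfolding subst_mpoly_def monom by (simp add: PConst_def mult_single)
  also have "\<dots> = q"
    by (rule poly_mapping_sum_single[symmetric])
  finally show ?thesis .
qed

lemma surj_subst_mpoly:
  assumes "\<And>w. subst_mpoly \<sigma> (\<tau> w) = PVar w"
  shows "surj (subst_mpoly \<sigma>)"
proof (rule surjI)
  fix q
  have "subst_mpoly \<sigma> (subst_mpoly \<tau> q) = subst_mpoly (subst_mpoly \<sigma> \<circ> \<tau>) q"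
    by (rule comm_ring_hom_subst_mpoly_commute[OF comm_ring_hom_subst_mpoly subst_mpoly_PConst])
  also have "subst_mpoly \<sigma> \<circ> \<tau> = PVar"
    using assms by auto
  finally show "subst_mpoly \<sigma> (subst_mpoly \<tau> q) = q"
    by (simp add: subst_mpoly_PVar_id)
qed

lemma map_mat_mat_of_rows_list:
  assumes "\<forall>r\<in>set rs. length r = nc"
  shows "map_mat f (mat_of_rows_list nc rs) = mat_of_rows_list nc (map (map f) rs)"
  using assms by (auto simp: mat_of_rows_list_def intro!: eq_matI)

lemma map_mat_mat_of_cols_list:
  assumes "\<forall>c\<in>set cs. length c = nr"
  shows "map_mat f (mat_of_cols_list nr cs) = mat_of_cols_list nr (map (map f) cs)"
  using assms by (auto simp: mat_of_cols_list_def intro!: eq_matI)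

lemma invertible_matI:
  assumes "A \<in> carrier_mat n n" "B \<in> carrier_mat n n" "A * B = 1\<^sub>m n" "B * A = 1\<^sub>m n"
  shows "invertible_mat A"
  using assms unfolding invertible_mat_def inverts_mat_def by auto

lemma mat_diag_eq_one_mat:
  assumes "\<And>i. i < n \<Longrightarrow> f i = 1"
  shows "mat_diag n f = 1\<^sub>m n"
  by (rule eq_matI) (simp_all add: mat_diag_def assms)

lemma invertible_mat_diag:
  fixes f g :: "nat \<Rightarrow> 'a::comm_semiring_1"
  assumes "\<And>i. i < n \<Longrightarrow> f i * g i = 1"
  shows "invertible_mat (mat_diag n f)"
proof (rule invertible_matI)
  show "mat_diag n f * mat_diag n g = 1\<^sub>m n"
    by (simp add: mat_diag_eq_one_mat assms)
  show "mat_diag n g * mat_diag n f = 1\<^sub>m n"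
    by (simp add: mat_diag_eq_one_mat assms mult.commute[of "g _"])
qed simp_all

lemma mult_antidiag2:
  fixes A :: "'a::comm_semiring_1 mat"
  assumes "A \<in> carrier_mat n 2"
  shows "A * mat_of_rows_list 2 [[0, c], [c, 0]] = mat n 2 (\<lambda>(i, j). c * A $$ (i, 1 - j))"
  using assms
  by (intro eq_matI) (auto simp: mat_of_rows_list_def scalar_prod_def less_2_cases_iff mult.commute)

lemma invertible_mat_antidiag2:
  fixes c d :: "'a::comm_semiring_1"
  assumes "c * d = 1"
  shows "invertible_mat (mat_of_rows_list 2 [[0, c], [c, 0]])"
proof (rule invertible_matI)
  have "d * c = 1" using assms by (simp add: mult.commute)
  let ?A = "mat_of_rows_list 2 [[0, c], [c, 0]]" and ?B = "mat_of_rows_list 2 [[0, d], [d, 0]]"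
  show "?A * ?B = 1\<^sub>m 2" "?B * ?A = 1\<^sub>m 2"
    by (rule eq_matI; auto simp: mat_of_rows_list_def scalar_prod_def less_2_cases_iff
        assms \<open>d * c = 1\<close>)+
qed (unfold mat_of_rows_list_def carrier_mat_def, simp_all)

lemma complex3_isoI:
  fixes d1 :: "'a::comm_ring_1 mat"
  assumes "U1 \<in> carrier_mat n n" "U2 \<in> carrier_mat p p" "U3 \<in> carrier_mat q q"
    and "invertible_mat U1" "invertible_mat U2" "invertible_mat U3"
    and "d1 \<in> carrier_mat m n" "e1 \<in> carrier_mat m n" "d2 \<in> carrier_mat n p"
    and "e2 \<in> carrier_mat n p" "d3 \<in> carrier_mat p q" "e3 \<in> carrier_mat p q"
    and "d1 = e1 * U1" "U1 * d2 = e2 * U2" "U2 * d3 = e3 * U3"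
  shows "complex3_iso d1 d2 d3 e1 e2 e3"
proof -
  have "invertible_mat (1\<^sub>m m :: 'a mat)"
    by (rule invertible_matI[of _ m "1\<^sub>m m"]) simp_all
  then show ?thesis
    unfolding complex3_iso_def using assms
    by (intro exI[of _ "1\<^sub>m m"] exI[of _ U1] exI[of _ U2] exI[of _ U3]) auto
qed

section \<open>The differentials of Q under the substitution\<close>

lemma sum_1_3: "sum f {1..3::nat} = f 1 + f 2 + f 3"
  by (simp add: numeral_3_eq_3 eval_nat_numeral)

lemma less_5_cases: "(j::nat) < 5 \<Longrightarrow> j = 0 \<or> j = 1 \<or> j = 2 \<or> j = 3 \<or> j = 4"
  by auto

lemma less_6_cases: "(j::nat) < 6 \<Longrightarrow> j = 0 \<or> j = 1 \<or> j = 2 \<or> j = 3 \<or> j = 4 \<or> j = 5"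
  by auto

lemma NQ_eq_ALt: "NQ a l = ALt a l 1 2 - ALt a l 2 1"
  unfolding NQ_def ALt_def sum_1_3 by (simp add: algebra_simps)

lemma Qd1_carrier: "Qd1 a l p z1 z2 \<in> carrier_mat 1 5"
  unfolding Qd1_def mat_of_rows_list_def carrier_mat_def by simp

lemma Qd2_carrier: "Qd2 a l p z1 z2 \<in> carrier_mat 5 6"
  unfolding Qd2_def mat_of_cols_list_def carrier_mat_def by simp

lemma Qd3_carrier: "Qd3 a l p z1 z2 \<in> carrier_mat 6 2"
  unfolding Qd3_def mat_of_rows_list_def carrier_mat_def by simp

lemma Md1_carrier: "Md1 x y z t \<in> carrier_mat 1 5"
  unfolding Md1_def mat_of_rows_list_def carrier_mat_def by simp

lemma Md2_carrier: "Md2 x y z t \<in> carrier_mat 5 6"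
  unfolding Md2_def mat_of_cols_list_def carrier_mat_def by simp

lemma Md3_carrier: "Md3 x y z t \<in> carrier_mat 6 2"
  unfolding Md3_def mat_of_rows_list_def carrier_mat_def by simp

context comm_ring_hom
begin

lemma map_mat_Qd1: "map_mat hom (Qd1 a l p z1 z2) =
    Qd1 (\<lambda>i j. hom (a i j)) (\<lambda>i j. hom (l i j)) (\<lambda>i j. hom (p i j)) (hom z1) (hom z2)"
  unfolding Qd1_def
  by (subst map_mat_mat_of_rows_list) (simp_all add: hom_distribs NQ_def PAv_def ALt_def det3_def sum_1_3)

lemma map_mat_Qd2: "map_mat hom (Qd2 a l p z1 z2) =
    Qd2 (\<lambda>i j. hom (a i j)) (\<lambda>i j. hom (l i j)) (\<lambda>i j. hom (p i j)) (hom z1) (hom z2)"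
  unfolding Qd2_def
  by (subst map_mat_mat_of_cols_list) (simp_all add: hom_distribs)

lemma map_mat_Qd3: "map_mat hom (Qd3 a l p z1 z2) =
    Qd3 (\<lambda>i j. hom (a i j)) (\<lambda>i j. hom (l i j)) (\<lambda>i j. hom (p i j)) (hom z1) (hom z2)"
  unfolding Qd3_def
  by (subst map_mat_mat_of_rows_list) (simp_all add: hom_distribs)

end

definition U1 :: "'r::comm_ring_1 mat" where "U1 = mat_diag 5 ((!) [-2, 1, -1, -1, -1])"
definition U2 :: "'r::comm_ring_1 mat" where "U2 = mat_diag 6 ((!) [2, -2, -2, -1, -1, 1])"
definition U3 :: "'r::comm_ring_1 mat" where "U3 = mat_of_rows_list 2 [[0, 2], [2, 0]]"

lemma U_carrier: "U1 \<in> carrier_mat 5 5" "U2 \<in> carrier_mat 6 6" "U3 \<in> carrier_mat 2 2"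
  by (simp_all add: U1_def U2_def) (unfold U3_def mat_of_rows_list_def carrier_mat_def, simp)

lemma invertible_U:
  assumes "2 * h = (1::'r::comm_ring_1)"
  shows "invertible_mat (U1 :: 'r mat)" "invertible_mat (U2 :: 'r mat)" "invertible_mat (U3 :: 'r mat)"
proof -
  show "invertible_mat (U1 :: 'r mat)"
    unfolding U1_def
    by (rule invertible_mat_diag[where g = "(!) [- h, 1, -1, -1, -1]"])
      (auto dest!: less_5_cases simp: assms)
  show "invertible_mat (U2 :: 'r mat)"
    unfolding U2_def
    by (rule invertible_mat_diag[where g = "(!) [h, - h, - h, -1, -1, 1]"])
      (auto dest!: less_6_cases simp: assms)
  show "invertible_mat (U3 :: 'r mat)"
    unfolding U3_def by (rule invertible_mat_antidiag2[OF assms])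
qed

context
  fixes x y :: "nat \<Rightarrow> nat \<Rightarrow> 'r::comm_ring_1" and z :: "nat \<Rightarrow> nat \<Rightarrow> nat \<Rightarrow> 'r" and t :: 'r
begin

fun mu_var :: "qvar \<Rightarrow> 'r" where
  "mu_var A11 = x 1 2" | "mu_var A12 = x 1 3" | "mu_var A13 = x 1 4"
| "mu_var A21 = y 1 2" | "mu_var A22 = y 1 3" | "mu_var A23 = y 1 4"
| "mu_var L11 = 2 * x 3 4" | "mu_var L12 = - 2 * x 2 4" | "mu_var L13 = 2 * x 2 3"
| "mu_var L21 = 2 * y 3 4" | "mu_var L22 = - 2 * y 2 4" | "mu_var L23 = 2 * y 2 3"
| "mu_var Psi12 = z 1 2 3" | "mu_var Psi13 = z 1 2 4" | "mu_var Psi23 = z 1 3 4"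
| "mu_var Z2 = 2 * z 2 3 4"
| "mu_var Z1 = t + x 3 4 * y 1 2 - x 2 4 * y 1 3 + x 2 3 * y 1 4
     - x 1 4 * y 2 3 + x 1 3 * y 2 4 - x 1 2 * y 3 4"

abbreviation "mu_A \<equiv> \<lambda>i j. mu_var (qa i j)"
abbreviation "mu_L \<equiv> \<lambda>i j. mu_var (ql i j)"
abbreviation "mu_Psi \<equiv> \<lambda>i j. mu_var (qpsi i j)"

definition pairing_xy :: 'r where "pairing_xy = x 1 2 * y 3 4 - x 1 3 * y 2 4 + x 1 4 * y 2 3"
definition pairing_yx :: 'r where "pairing_yx = y 1 2 * x 3 4 - y 1 3 * x 2 4 + y 1 4 * x 2 3"

lemma ALt_mu_var:
  "ALt mu_A mu_L 1 1 = 2 * Ma x" "ALt mu_A mu_L 2 2 = 2 * Mc y"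
  "ALt mu_A mu_L 1 2 = 2 * pairing_xy" "ALt mu_A mu_L 2 1 = 2 * pairing_yx"
  unfolding ALt_def sum_1_3
  by (simp_all add: qa_def ql_def Ma_def Mc_def pairing_xy_def pairing_yx_def algebra_simps)

lemma mu_var_Z1: "mu_var Z1 = t + pairing_yx - pairing_xy"
  by (simp add: pairing_xy_def pairing_yx_def algebra_simps)

lemma Mb_eq_pairings: "Mb x y = pairing_xy + pairing_yx"
  by (simp add: Mb_def pairing_xy_def pairing_yx_def algebra_simps)

lemma Qd1_mu_var_last:
  "Qd1 mu_A mu_L mu_Psi (mu_var Z1) (mu_var Z2) $$ (0, 4) = Mu x y - t ^ 2"
proof -
  have "Qd1 mu_A mu_L mu_Psi (mu_var Z1) (mu_var Z2) $$ (0, 4)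
      = - (ALt mu_A mu_L 1 1 * ALt mu_A mu_L 2 2 - ALt mu_A mu_L 1 2 * ALt mu_A mu_L 2 1)
        - mu_var Z1 * (ALt mu_A mu_L 1 2 - ALt mu_A mu_L 2 1) - mu_var Z1 ^ 2"
    by (simp add: Qd1_def mat_of_rows_list_def NQ_eq_ALt del: mu_var.simps)
  also have "\<dots> = Mu x y - t ^ 2"
    unfolding ALt_mu_var mu_var_Z1 Mu_def Mb_eq_pairings
    by (simp add: algebra_simps power2_eq_square)
  finally show ?thesis .
qed

lemma Qd1_mu_var: "Qd1 mu_A mu_L mu_Psi (mu_var Z1) (mu_var Z2) = Md1 x y z t * U1"
  unfolding U1_def mat_diag_mult_right[OF Md1_carrier]
proof (rule eq_matI, goal_cases)
  case (1 i j)
  then have "i = 0" "j < 5" by simp_all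
  show ?case
  proof (cases "j = 4")
    case True
    then show ?thesis
      unfolding \<open>i = 0\<close> True Qd1_mu_var_last by (simp add: Md1_def mat_of_rows_list_def)
  next
    case False
    with \<open>j < 5\<close> have "j = 0 \<or> j = 1 \<or> j = 2 \<or> j = 3" by auto
    then show ?thesis
      unfolding \<open>i = 0\<close> Qd1_def NQ_def ALt_def sum_1_3
      by (elim disjE; simp add: Md1_def mat_of_rows_list_def qa_def ql_def qpsi_def PAv_def
            det3_def u123_def u124_def u134_def u234_def DM_def; simp add: algebra_simps)
  qed
qed (simp_all add: Qd1_carrier[THEN carrier_matD(1)] Qd1_carrier[THEN carrier_matD(2)])

lemma Qd2_mu_var: "U1 * Qd2 mu_A mu_L mu_Psi (mu_var Z1) (mu_var Z2) = Md2 x y z t * U2"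
  unfolding U1_def U2_def mat_diag_mult_left[OF Qd2_carrier] mat_diag_mult_right[OF Md2_carrier]
proof (rule cong_mat, goal_cases)
  case (3 i j)
  from less_5_cases[OF 3(1)] less_6_cases[OF 3(2)] show ?case
    by (elim disjE; simp add: Qd2_def Md2_def mat_of_cols_list_def qa_def ql_def qpsi_def;
        simp add: algebra_simps)
qed simp_all

lemma Qd3_mu_var: "U2 * Qd3 mu_A mu_L mu_Psi (mu_var Z1) (mu_var Z2) = Md3 x y z t * U3"
  unfolding U2_def U3_def mat_diag_mult_left[OF Qd3_carrier] mult_antidiag2[OF Md3_carrier]
proof (rule cong_mat, goal_cases)
  case (3 i j)
  from less_6_cases[OF 3(1)] less_2_cases[OF 3(2)] show ?case
    by (elim disjE; simp add: Qd3_def Md3_def mat_of_rows_list_def qa_def ql_def qpsi_def;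
        simp add: algebra_simps)
qed simp_all

end

definition mu :: "(qvar, 'a::comm_ring_1) mpoly \<Rightarrow> (mvar, 'a) mpoly" where
  "mu = subst_mpoly (mu_var (\<lambda>i j. PVar (mx i j)) (\<lambda>i j. PVar (my i j)) (\<lambda>i j k. PVar (mz i j k)) (PVar T))"

lemma mu_PVar:
  "mu (PVar v) = mu_var (\<lambda>i j. PVar (mx i j)) (\<lambda>i j. PVar (my i j)) (\<lambda>i j k. PVar (mz i j k)) (PVar T) v"
  by (simp add: mu_def)

lemma mu_PConst [simp]: "mu (PConst c) = PConst c"
  by (simp add: mu_def)

lemma map_mat_mu_QQ:
  "map_mat mu QQ1 = (MM1 :: (mvar, 'a::comm_ring_1) mpoly mat) * U1"
  "U1 * map_mat mu QQ2 = (MM2 :: (mvar, 'a) mpoly mat) * U2"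
  "U2 * map_mat mu QQ3 = (MM3 :: (mvar, 'a) mpoly mat) * U3"
proof -
  interpret comm_ring_hom "mu :: (qvar, 'a) mpoly \<Rightarrow> (mvar, 'a) mpoly"
    unfolding mu_def by (rule comm_ring_hom_subst_mpoly)
  show "map_mat mu QQ1 = (MM1 :: (mvar, 'a) mpoly mat) * U1"
    unfolding QQ1_def MM1_def map_mat_Qd1 mu_PVar by (rule Qd1_mu_var)
  show "U1 * map_mat mu QQ2 = (MM2 :: (mvar, 'a) mpoly mat) * U2"
    unfolding QQ2_def MM2_def map_mat_Qd2 mu_PVar by (rule Qd2_mu_var)
  show "U2 * map_mat mu QQ3 = (MM3 :: (mvar, 'a) mpoly mat) * U3"
    unfolding QQ3_def MM3_def map_mat_Qd3 mu_PVar by (rule Qd3_mu_var)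
qed

fun mu_preimage :: "'a \<Rightarrow> mvar \<Rightarrow> (qvar, 'a::comm_ring_1) mpoly" where
  "mu_preimage h X12 = PVar A11" | "mu_preimage h X13 = PVar A12" | "mu_preimage h X14 = PVar A13"
| "mu_preimage h Y12 = PVar A21" | "mu_preimage h Y13 = PVar A22" | "mu_preimage h Y14 = PVar A23"
| "mu_preimage h X34 = PConst h * PVar L11" | "mu_preimage h X24 = - (PConst h * PVar L12)"
| "mu_preimage h X23 = PConst h * PVar L13"
| "mu_preimage h Y34 = PConst h * PVar L21" | "mu_preimage h Y24 = - (PConst h * PVar L22)"
| "mu_preimage h Y23 = PConst h * PVar L23"
| "mu_preimage h Z123 = PVar Psi12" | "mu_preimage h Z124 = PVar Psi13"
| "mu_preimage h Z134 = PVar Psi23"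
| "mu_preimage h Z234 = PConst h * PVar Z2"
| "mu_preimage h T = PVar Z1 - PConst h * (PVar L11 * PVar A21 + PVar L12 * PVar A22
      + PVar L13 * PVar A23 - PVar A13 * PVar L23 - PVar A12 * PVar L22 - PVar A11 * PVar L21)"

lemma PConst_half:
  assumes "2 * h = (1::'a::comm_ring_1)"
  shows "PConst h * 2 = (1 :: ('v, 'a) mpoly)"
proof -
  have "PConst h * (2 :: ('v, 'a) mpoly) = PConst h * PConst 2"
    by (simp add: PConst_def)
  also have "\<dots> = PConst (h * 2)"
    by (rule PConst_mult[symmetric])
  finally show ?thesis
    using assms by (simp add: mult.commute)
qed

lemma mu_mu_preimage:
  assumes "2 * h = (1::'a::comm_ring_1)"
  shows "mu (mu_preimage h w) = (PVar w :: (mvar, 'a) mpoly)"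
proof -
  interpret comm_ring_hom "mu :: (qvar, 'a) mpoly \<Rightarrow> (mvar, 'a) mpoly"
    unfolding mu_def by (rule comm_ring_hom_subst_mpoly)
  have half: "PConst h * 2 = (1 :: (mvar, 'a) mpoly)"
    by (rule PConst_half[OF assms])
  then have half': "PConst h * (2 * p) = p" for p :: "(mvar, 'a) mpoly"
    by (metis mult.assoc mult_1)
  show ?thesis
  proof (cases w)
    case T
    let ?s = "PVar X34 * PVar Y12 - PVar X24 * PVar Y13 + PVar X23 * PVar Y14
      - PVar X14 * PVar Y23 + PVar X13 * PVar Y24 - PVar X12 * PVar Y34 :: (mvar, 'a) mpoly"
    have "mu (mu_preimage h w) = PVar T + ?s - PConst h * (2 * ?s)"
      using T by (simp add: mu_PVar mx_def my_def hom_distribs algebra_simps)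
    also have "\<dots> = PVar w"
      unfolding half' using T by simp
    finally show ?thesis .
  qed (simp_all add: mu_PVar mx_def my_def mz_def hom_distribs half half' mult.assoc[symmetric]
      mult_minus_right[symmetric] del: mult_minus_right)
qed

lemma surj_mu:
  assumes "(2::'a::comm_ring_1) dvd 1"
  shows "surj (mu :: (qvar, 'a) mpoly \<Rightarrow> (mvar, 'a) mpoly)"
proof -
  from assms obtain h :: 'a where "2 * h = 1" by (auto elim: dvdE)
  then show ?thesis
    unfolding mu_def by (rule surj_subst_mpoly[OF mu_mu_preimage[unfolded mu_def]])
qed

lemma complex3_iso_mu:
  assumes "(2::'a::comm_ring_1) dvd 1"
  shows "complex3_iso (map_mat mu QQ1) (map_mat mu QQ2) (map_mat mu QQ3)
    (MM1 :: (mvar, 'a) mpoly mat) MM2 MM3"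
proof (rule complex3_isoI[where m = 1 and n = 5 and p = 6 and q = 2,
      OF U_carrier _ _ _ _ _ _ _ _ _ map_mat_mu_QQ])
  from assms obtain h :: 'a where "2 * h = 1" by (auto elim: dvdE)
  then have "2 * PConst h = (1 :: (mvar, 'a) mpoly)"
    using PConst_half[of h] by (simp add: mult.commute)
  then show "invertible_mat (U1 :: (mvar, 'a) mpoly mat)" "invertible_mat (U2 :: (mvar, 'a) mpoly mat)"
    "invertible_mat (U3 :: (mvar, 'a) mpoly mat)"
    by (rule invertible_U)+
qed (simp_all only: map_carrier_mat QQ1_def QQ2_def QQ3_def MM1_def MM2_def MM3_def,
    (rule Qd1_carrier Qd2_carrier Qd3_carrier Md1_carrier Md2_carrier Md3_carrier)+)

theorem theorem4p5:
  assumes "noetherian_ring TYPE('a::comm_ring_1)"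
    and "(2::'a) dvd 1"
  shows "\<exists>\<mu> :: (qvar, 'a) mpoly \<Rightarrow> (mvar, 'a) mpoly.
           R0_alg_hom \<mu> \<and> surj \<mu> \<and>
           complex3_iso (map_mat \<mu> QQ1) (map_mat \<mu> QQ2) (map_mat \<mu> QQ3) MM1 MM2 MM3"
proof (intro exI conjI)
  show "R0_alg_hom (mu :: (qvar, 'a) mpoly \<Rightarrow> (mvar, 'a) mpoly)"
    unfolding mu_def by (rule R0_alg_hom_subst_mpoly)
  show "surj (mu :: (qvar, 'a) mpoly \<Rightarrow> (mvar, 'a) mpoly)"
    using assms(2) by (rule surj_mu)
  show "complex3_iso (map_mat mu QQ1) (map_mat mu QQ2) (map_mat mu QQ3) (MM1 :: (mvar, 'a) mpoly mat)
      MM2 MM3"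
    using assms(2) by (rule complex3_iso_mu)
qed

end
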